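(* Let $L\subseteq Q$ be a dense extension of Lie algebras such that $Q$ is a multiplicatively semiprime algebra of quotients of $L$. Then for every essential ideal $I$ of $L$, $\mathrm{l.ann}_{A(Q)}(\widetilde I)=0$.
   Context: Lie algebras over a commutative unital ring $\Phi$. $\mathrm{ad}_x(y)=[x,y]$; $A(Q)$ is the associative subalgebra of $\mathrm{End}_\Phi(Q)$ generated by all $\mathrm{ad}_x$, $x\in Q$, and $M(Q)$ is the one generated by the identity and all $\mathrm{ad}_x$. $A_Q(L)$ is the subalgebra of $A(Q)$ generated by $\{\mathrm{ad}_x:x\in L\}$, and for an ideal $I$ of $L$, $\widetilde I$ is the two-sided ideal of $A_Q(L)$ generated by $\{\mathrm{ad}_x:x\in I\}$. $\mathrm{l.ann}_B(X)=\{b\in B:bX=0\}$. An extension $L\subseteq Q$ is dense if the only $\mu\in M(Q)$ with $\mu(L)=0$ is $\mu=0$. A Lie algebra is semiprime if $[I,I]\neq0$ for every nonzero ideal $I$; $Q$ is multiplicatively semiprime if $Q$ and $M(Q)$ are semiprime. An ideal is essential if it meets every nonzero ideal nontrivially. $Q$ is an algebra of quotients of $L$ if for every nonzero $q\in Q$ there is an ideal $J$ of $L$ with $\mathrm{Ann}_L(J)=\{a\in L:[a,J]=0\}=0$ and $0\ne[J,q]\subseteq L$. *)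

theory Defs
  imports Main "HOL.Modules"
begin

text \<open>Lie algebra Q over a commutative unital ring \<Phi> (= type 'r): the carrier is the whole
  type 'q, a \<Phi>-module via scale, with bracket br.\<close>

definition lie_algebra :: "('r::comm_ring_1 \<Rightarrow> 'q::ab_group_add \<Rightarrow> 'q) \<Rightarrow> ('q \<Rightarrow> 'q \<Rightarrow> 'q) \<Rightarrow> bool" where
  "lie_algebra scale br \<longleftrightarrow> module scale \<and>
     (\<forall>x y z. br (x + y) z = br x z + br y z) \<and>
     (\<forall>x y z. br x (y + z) = br x y + br x z) \<and>
     (\<forall>c x y. br (scale c x) y = scale c (br x y)) \<and>
     (\<forall>c x y. br x (scale c y) = scale c (br x y)) \<and>
     (\<forall>x. br x x = 0) \<and>
     (\<forall>x y z. br x (br y z) + br y (br z x) + br z (br x y) = 0)"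

definition ad :: "('q \<Rightarrow> 'q \<Rightarrow> 'q) \<Rightarrow> 'q \<Rightarrow> 'q \<Rightarrow> 'q" where
  "ad br x = (\<lambda>y. br x y)"

inductive_set alg_gen :: "('r \<Rightarrow> 'q \<Rightarrow> 'q) \<Rightarrow> ('q \<Rightarrow> 'q) set \<Rightarrow> ('q::ab_group_add \<Rightarrow> 'q) set"
  for scale :: "'r \<Rightarrow> 'q \<Rightarrow> 'q" and S :: "('q \<Rightarrow> 'q) set" where
  gen: "f \<in> S \<Longrightarrow> f \<in> alg_gen scale S"
| zero: "(\<lambda>_. 0) \<in> alg_gen scale S"
| add: "f \<in> alg_gen scale S \<Longrightarrow> g \<in> alg_gen scale S \<Longrightarrow> (\<lambda>x. f x + g x) \<in> alg_gen scale S"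
| smul: "f \<in> alg_gen scale S \<Longrightarrow> (\<lambda>x. scale c (f x)) \<in> alg_gen scale S"
| mult: "f \<in> alg_gen scale S \<Longrightarrow> g \<in> alg_gen scale S \<Longrightarrow> f \<circ> g \<in> alg_gen scale S"

inductive_set ideal_gen :: "('r \<Rightarrow> 'q \<Rightarrow> 'q) \<Rightarrow> ('q \<Rightarrow> 'q) set \<Rightarrow> ('q \<Rightarrow> 'q) set \<Rightarrow> ('q::ab_group_add \<Rightarrow> 'q) set"
  for scale :: "'r \<Rightarrow> 'q \<Rightarrow> 'q" and B :: "('q \<Rightarrow> 'q) set" and X :: "('q \<Rightarrow> 'q) set" where
  gen: "f \<in> X \<Longrightarrow> f \<in> ideal_gen scale B X"
| zero: "(\<lambda>_. 0) \<in> ideal_gen scale B X"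
| add: "f \<in> ideal_gen scale B X \<Longrightarrow> g \<in> ideal_gen scale B X \<Longrightarrow> (\<lambda>x. f x + g x) \<in> ideal_gen scale B X"
| smul: "f \<in> ideal_gen scale B X \<Longrightarrow> (\<lambda>x. scale c (f x)) \<in> ideal_gen scale B X"
| lmult: "b \<in> B \<Longrightarrow> f \<in> ideal_gen scale B X \<Longrightarrow> b \<circ> f \<in> ideal_gen scale B X"
| rmult: "b \<in> B \<Longrightarrow> f \<in> ideal_gen scale B X \<Longrightarrow> f \<circ> b \<in> ideal_gen scale B X"

definition AQ :: "('r \<Rightarrow> 'q \<Rightarrow> 'q) \<Rightarrow> ('q \<Rightarrow> 'q \<Rightarrow> 'q) \<Rightarrow> ('q::ab_group_add \<Rightarrow> 'q) set" where
  "AQ scale br = alg_gen scale {ad br x | x. True}"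

definition MQ :: "('r \<Rightarrow> 'q \<Rightarrow> 'q) \<Rightarrow> ('q \<Rightarrow> 'q \<Rightarrow> 'q) \<Rightarrow> ('q::ab_group_add \<Rightarrow> 'q) set" where
  "MQ scale br = alg_gen scale (insert id {ad br x | x. True})"

definition AQL :: "('r \<Rightarrow> 'q \<Rightarrow> 'q) \<Rightarrow> ('q \<Rightarrow> 'q \<Rightarrow> 'q) \<Rightarrow> 'q set \<Rightarrow> ('q::ab_group_add \<Rightarrow> 'q) set" where
  "AQL scale br L = alg_gen scale {ad br x | x. x \<in> L}"

definition tilde :: "('r \<Rightarrow> 'q \<Rightarrow> 'q) \<Rightarrow> ('q \<Rightarrow> 'q \<Rightarrow> 'q) \<Rightarrow> 'q set \<Rightarrow> 'q set \<Rightarrow> ('q::ab_group_add \<Rightarrow> 'q) set" where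
  "tilde scale br L I = ideal_gen scale (AQL scale br L) {ad br x | x. x \<in> I}"

definition l_ann :: "('q \<Rightarrow> 'q) set \<Rightarrow> ('q \<Rightarrow> 'q) set \<Rightarrow> ('q::zero \<Rightarrow> 'q) set" where
  "l_ann B X = {b \<in> B. \<forall>f \<in> X. b \<circ> f = (\<lambda>_. 0)}"

definition lie_subalgebra :: "('r::comm_ring_1 \<Rightarrow> 'q::ab_group_add \<Rightarrow> 'q) \<Rightarrow> ('q \<Rightarrow> 'q \<Rightarrow> 'q) \<Rightarrow> 'q set \<Rightarrow> bool" where
  "lie_subalgebra scale br L \<longleftrightarrow> module.subspace scale L \<and> (\<forall>x\<in>L. \<forall>y\<in>L. br x y \<in> L)"

definition lie_ideal :: "('r::comm_ring_1 \<Rightarrow> 'q::ab_group_add \<Rightarrow> 'q) \<Rightarrow> ('q \<Rightarrow> 'q \<Rightarrow> 'q) \<Rightarrow> 'q set \<Rightarrow> 'q set \<Rightarrow> bool" where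
  "lie_ideal scale br L I \<longleftrightarrow> module.subspace scale I \<and> I \<subseteq> L \<and> (\<forall>x\<in>L. \<forall>y\<in>I. br x y \<in> I)"

definition essential_ideal :: "('r::comm_ring_1 \<Rightarrow> 'q::ab_group_add \<Rightarrow> 'q) \<Rightarrow> ('q \<Rightarrow> 'q \<Rightarrow> 'q) \<Rightarrow> 'q set \<Rightarrow> 'q set \<Rightarrow> bool" where
  "essential_ideal scale br L I \<longleftrightarrow> lie_ideal scale br L I \<and>
     (\<forall>K. lie_ideal scale br L K \<and> K \<noteq> {0} \<longrightarrow> I \<inter> K \<noteq> {0})"

definition lie_semiprime :: "('r::comm_ring_1 \<Rightarrow> 'q::ab_group_add \<Rightarrow> 'q) \<Rightarrow> ('q \<Rightarrow> 'q \<Rightarrow> 'q) \<Rightarrow> bool" where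
  "lie_semiprime scale br \<longleftrightarrow>
     (\<forall>I. lie_ideal scale br UNIV I \<and> I \<noteq> {0} \<longrightarrow> (\<exists>a\<in>I. \<exists>b\<in>I. br a b \<noteq> 0))"

definition alg_ideal :: "('r \<Rightarrow> 'q::ab_group_add \<Rightarrow> 'q) \<Rightarrow> ('q \<Rightarrow> 'q) set \<Rightarrow> ('q \<Rightarrow> 'q) set \<Rightarrow> bool" where
  "alg_ideal scale B J \<longleftrightarrow> J \<subseteq> B \<and> (\<lambda>_. 0) \<in> J \<and>
     (\<forall>f\<in>J. \<forall>g\<in>J. (\<lambda>x. f x + g x) \<in> J) \<and> (\<forall>c. \<forall>f\<in>J. (\<lambda>x. scale c (f x)) \<in> J) \<and>
     (\<forall>b\<in>B. \<forall>f\<in>J. b \<circ> f \<in> J \<and> f \<circ> b \<in> J)"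

definition alg_semiprime :: "('r \<Rightarrow> 'q::ab_group_add \<Rightarrow> 'q) \<Rightarrow> ('q \<Rightarrow> 'q) set \<Rightarrow> bool" where
  "alg_semiprime scale B \<longleftrightarrow>
     (\<forall>J. alg_ideal scale B J \<and> J \<noteq> {\<lambda>_. 0} \<longrightarrow> (\<exists>f\<in>J. \<exists>g\<in>J. f \<circ> g \<noteq> (\<lambda>_. 0)))"

definition mult_semiprime :: "('r::comm_ring_1 \<Rightarrow> 'q::ab_group_add \<Rightarrow> 'q) \<Rightarrow> ('q \<Rightarrow> 'q \<Rightarrow> 'q) \<Rightarrow> bool" where
  "mult_semiprime scale br \<longleftrightarrow> lie_semiprime scale br \<and> alg_semiprime scale (MQ scale br)"

definition dense_ext :: "('r::comm_ring_1 \<Rightarrow> 'q::ab_group_add \<Rightarrow> 'q) \<Rightarrow> ('q \<Rightarrow> 'q \<Rightarrow> 'q) \<Rightarrow> 'q set \<Rightarrow> bool" where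
  "dense_ext scale br L \<longleftrightarrow> (\<forall>\<mu>\<in>MQ scale br. (\<forall>x\<in>L. \<mu> x = 0) \<longrightarrow> \<mu> = (\<lambda>_. 0))"

definition lie_ann :: "('q \<Rightarrow> 'q \<Rightarrow> 'q) \<Rightarrow> 'q set \<Rightarrow> 'q set \<Rightarrow> ('q::zero) set" where
  "lie_ann br L J = {a \<in> L. \<forall>j\<in>J. br a j = 0}"

definition algebra_of_quotients :: "('r::comm_ring_1 \<Rightarrow> 'q::ab_group_add \<Rightarrow> 'q) \<Rightarrow> ('q \<Rightarrow> 'q \<Rightarrow> 'q) \<Rightarrow> 'q set \<Rightarrow> bool" where
  "algebra_of_quotients scale br L \<longleftrightarrow>
     (\<forall>q. q \<noteq> 0 \<longrightarrow> (\<exists>J. lie_ideal scale br L J \<and> lie_ann br L J = {0} \<and>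
        {br a q | a. a \<in> J} \<noteq> {0} \<and> {br a q | a. a \<in> J} \<subseteq> L))"

end

theory Submission
  imports Defs
begin

text \<open>
  Let \<mu> \<in> A(Q) annihilate I-tilde, so that \<mu> ad a = 0 for all a \<in> I. Density makes the left
  annihilator of ad(I) in M(Q) stable under right multiplication by M(Q): if \<nu> ad(I) = 0, then
  \<nu> ad q ad a vanishes on L, because \<nu> [q, [a, x]] = - (\<nu> ad [a, x]) q with [a, x] \<in> I. Hence for
  x \<in> I the element g = ad x \<mu> satisfies g M(Q) g = 0. The ideal J of M(Q) generated by such a g
  then satisfies J M(Q) J = 0, so J J = 0 as M(Q) contains the identity, and semiprimeness of M(Q)
  gives g = 0: every value of \<mu> is annihilated by I.

  It remains to see that Ann_Q(I) = 0. The same sandwich argument applied to g = ad k shows that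
  every k \<in> I \<inter> Ann_L(I) is central, hence zero since Q is semiprime; as Ann_L(I) is an ideal of L,
  essentiality of I gives Ann_L(I) = 0. Finally, for 0 \<noteq> w \<in> Ann_Q(I) the algebra-of-quotients
  property provides j \<in> L with 0 \<noteq> [j, w] \<in> L, and the Jacobi identity puts [j, w] into Ann_L(I).
\<close>

definition sandwich_zero :: "('q::zero \<Rightarrow> 'q) set \<Rightarrow> ('q \<Rightarrow> 'q) set \<Rightarrow> ('q \<Rightarrow> 'q) set \<Rightarrow> bool" where
  "sandwich_zero B X Y \<longleftrightarrow> (\<forall>x\<in>X. \<forall>\<beta>\<in>B. \<forall>y\<in>Y. x \<circ> \<beta> \<circ> y = (\<lambda>_. 0))"

lemma alg_gen_mono:
  assumes "S \<subseteq> T" and "f \<in> alg_gen scale S"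
  shows "f \<in> alg_gen scale T"
  using assms(2) by induction (use assms(1) in \<open>blast intro: alg_gen.intros\<close>)+

context module
begin

lemma module_hom_alg_gen:
  assumes "\<forall>s\<in>S. module_hom scale scale s" and "f \<in> alg_gen scale S"
  shows "module_hom scale scale f"
  using assms(2)
proof induction
  case (gen f)
  with assms(1) show ?case by blast
next
  case zero
  show ?case by (simp add: module_hom_iff module_axioms)
next
  case (add f g)
  then show ?case by (simp add: module_hom_iff scale_right_distrib algebra_simps)
next
  case (smul f c)
  then show ?case by (simp add: module_hom_iff scale_right_distrib mult.commute)
next
  case (mult f g)
  then show ?case using module_hom_compose[of scale scale g scale f] by (simp add: comp_def)
qed

lemma l_ann_zero: "(\<lambda>_. 0) \<in> l_ann (alg_gen scale S) X"
  unfolding l_ann_def by (simp add: alg_gen.zero comp_def)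

lemma l_ann_add:
  assumes "\<mu> \<in> l_ann (alg_gen scale S) X" and "\<nu> \<in> l_ann (alg_gen scale S) X"
  shows "(\<lambda>x. \<mu> x + \<nu> x) \<in> l_ann (alg_gen scale S) X"
  using assms unfolding l_ann_def by (auto intro: alg_gen.add simp: fun_eq_iff)

lemma l_ann_scale:
  assumes "\<nu> \<in> l_ann (alg_gen scale S) X"
  shows "(\<lambda>x. c *s \<nu> x) \<in> l_ann (alg_gen scale S) X"
  using assms unfolding l_ann_def by (auto intro: alg_gen.smul simp: fun_eq_iff)

lemma l_ann_comp_alg_gen:
  assumes lin: "\<forall>s\<in>S. module_hom scale scale s"
    and gens: "\<And>\<nu> s. \<nu> \<in> l_ann (alg_gen scale S) X \<Longrightarrow> s \<in> S \<Longrightarrow> \<nu> \<circ> s \<in> l_ann (alg_gen scale S) X"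
    and f: "f \<in> alg_gen scale S"
  shows "\<nu> \<in> l_ann (alg_gen scale S) X \<Longrightarrow> \<nu> \<circ> f \<in> l_ann (alg_gen scale S) X"
  using f
proof (induction arbitrary: \<nu>)
  case (gen s)
  from gen.prems gen.hyps show ?case by (rule gens)
next
  case zero
  have "module_hom scale scale \<nu>"
    using zero module_hom_alg_gen[OF lin] unfolding l_ann_def by blast
  then show ?case using l_ann_zero by (simp add: comp_def module_hom.zero)
next
  case (add f g)
  have "module_hom scale scale \<nu>"
    using add.prems module_hom_alg_gen[OF lin] unfolding l_ann_def by blast
  then have "\<nu> \<circ> (\<lambda>x. f x + g x) = (\<lambda>x. (\<nu> \<circ> f) x + (\<nu> \<circ> g) x)"
    by (simp add: fun_eq_iff module_hom.add)
  then show ?case using l_ann_add[OF add.IH(1)[OF add.prems] add.IH(2)[OF add.prems]] by simp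
next
  case (smul f c)
  have "module_hom scale scale \<nu>"
    using smul.prems module_hom_alg_gen[OF lin] unfolding l_ann_def by blast
  then have "\<nu> \<circ> (\<lambda>x. c *s f x) = (\<lambda>x. c *s (\<nu> \<circ> f) x)"
    by (simp add: fun_eq_iff module_hom.scale)
  then show ?case using l_ann_scale[OF smul.IH[OF smul.prems]] by simp
next
  case (mult f g)
  have "\<nu> \<circ> f \<circ> g \<in> l_ann (alg_gen scale S) X"
    using mult.prems by (intro mult.IH)
  then show ?case by (simp only: comp_assoc)
qed

lemma sandwich_zero_ideal_gen_left:
  assumes lin: "\<forall>b\<in>B. module_hom scale scale b" and closed: "\<forall>b\<in>B. \<forall>b'\<in>B. b \<circ> b' \<in> B"
    and "sandwich_zero B X Y"
  shows "sandwich_zero B (ideal_gen scale B X) Y"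
  unfolding sandwich_zero_def
proof (intro ballI)
  fix x \<beta> y assume "x \<in> ideal_gen scale B X" and \<beta>: "\<beta> \<in> B" and y: "y \<in> Y"
  from this(1) \<beta> show "x \<circ> \<beta> \<circ> y = (\<lambda>_. 0)"
  proof (induction arbitrary: \<beta>)
    case (gen x)
    with y assms(3) show ?case unfolding sandwich_zero_def by blast
  next
    case zero
    show ?case by (simp add: comp_def)
  next
    case (add f g)
    have "f \<circ> \<beta> \<circ> y = (\<lambda>_. 0)" "g \<circ> \<beta> \<circ> y = (\<lambda>_. 0)"
      using add.IH add.prems by blast+
    then show ?case by (simp add: fun_eq_iff)
  next
    case (smul f c)
    have "f \<circ> \<beta> \<circ> y = (\<lambda>_. 0)"
      using smul.IH smul.prems by blast
    then show ?case by (simp add: fun_eq_iff)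
  next
    case (lmult b f)
    have "module_hom scale scale b" using lin lmult.hyps by blast
    moreover have "f \<circ> \<beta> \<circ> y = (\<lambda>_. 0)" using lmult.IH lmult.prems by blast
    ultimately show ?case by (simp add: fun_eq_iff module_hom.zero)
  next
    case (rmult b f)
    have "b \<circ> \<beta> \<in> B" using closed rmult.hyps rmult.prems by blast
    then have "f \<circ> (b \<circ> \<beta>) \<circ> y = (\<lambda>_. 0)" using rmult.IH by blast
    then show ?case by (simp add: comp_def)
  qed
qed

lemma sandwich_zero_ideal_gen_right:
  assumes lin: "\<forall>b\<in>B. module_hom scale scale b" and closed: "\<forall>b\<in>B. \<forall>b'\<in>B. b \<circ> b' \<in> B"
    and linX: "\<forall>x\<in>X. module_hom scale scale x" and "sandwich_zero B X Y"
  shows "sandwich_zero B X (ideal_gen scale B Y)"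
  unfolding sandwich_zero_def
proof (intro ballI)
  fix x \<beta> y assume x: "x \<in> X" and \<beta>: "\<beta> \<in> B" and "y \<in> ideal_gen scale B Y"
  have hom: "module_hom scale scale (x \<circ> \<beta>')" if "\<beta>' \<in> B" for \<beta>'
    using x that lin linX module_hom_compose by blast
  from \<open>y \<in> ideal_gen scale B Y\<close> \<beta> show "x \<circ> \<beta> \<circ> y = (\<lambda>_. 0)"
  proof (induction arbitrary: \<beta>)
    case (gen y)
    with x assms(4) show ?case unfolding sandwich_zero_def by blast
  next
    case zero
    show ?case using module_hom.zero[OF hom[OF zero]] by (simp add: comp_def)
  next
    case (add f g)
    have "x \<circ> \<beta> \<circ> f = (\<lambda>_. 0)" "x \<circ> \<beta> \<circ> g = (\<lambda>_. 0)"
      using add.IH add.prems by blast+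
    then show ?case using module_hom.add[OF hom[OF add.prems]] by (simp add: fun_eq_iff)
  next
    case (smul f c)
    have "x \<circ> \<beta> \<circ> f = (\<lambda>_. 0)"
      using smul.IH smul.prems by blast
    then show ?case using module_hom.scale[OF hom[OF smul.prems]] by (simp add: fun_eq_iff)
  next
    case (lmult b f)
    have "\<beta> \<circ> b \<in> B" using closed lmult.hyps lmult.prems by blast
    then have "x \<circ> (\<beta> \<circ> b) \<circ> f = (\<lambda>_. 0)" using lmult.IH by blast
    then show ?case by (simp add: comp_def)
  next
    case (rmult b f)
    have "x \<circ> \<beta> \<circ> f = (\<lambda>_. 0)" using rmult.IH rmult.prems by blast
    then show ?case by (simp add: comp_def fun_eq_iff)
  qed
qed

lemma alg_ideal_ideal_gen:
  assumes "X \<subseteq> alg_gen scale S"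
  shows "alg_ideal scale (alg_gen scale S) (ideal_gen scale (alg_gen scale S) X)"
proof -
  have "f \<in> alg_gen scale S" if "f \<in> ideal_gen scale (alg_gen scale S) X" for f
    using that by induction (use assms in \<open>blast intro: alg_gen.intros\<close>)+
  then show ?thesis
    unfolding alg_ideal_def by (auto intro: ideal_gen.intros)
qed

lemma alg_semiprime_sandwich_zero:
  assumes lin: "\<forall>s\<in>S. module_hom scale scale s" and id: "id \<in> alg_gen scale S"
    and semiprime: "alg_semiprime scale (alg_gen scale S)"
    and g: "g \<in> alg_gen scale S" and "sandwich_zero (alg_gen scale S) {g} {g}"
  shows "g = (\<lambda>_. 0)"
proof -
  let ?B = "alg_gen scale S"
  let ?J = "ideal_gen scale ?B {g}"
  have linB: "\<forall>b\<in>?B. module_hom scale scale b"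
    using lin module_hom_alg_gen by blast
  have closed: "\<forall>b\<in>?B. \<forall>b'\<in>?B. b \<circ> b' \<in> ?B"
    by (blast intro: alg_gen.mult)
  have "sandwich_zero ?B {g} ?J"
    using sandwich_zero_ideal_gen_right[OF linB closed] linB g assms(5) by blast
  then have "sandwich_zero ?B ?J ?J"
    by (rule sandwich_zero_ideal_gen_left[OF linB closed])
  then have "\<forall>f\<in>?J. \<forall>h\<in>?J. f \<circ> h = (\<lambda>_. 0)"
    using id unfolding sandwich_zero_def by fastforce
  then have "?J = {\<lambda>_. 0}"
    using semiprime alg_ideal_ideal_gen[of "{g}"] g unfolding alg_semiprime_def by blast
  moreover have "g \<in> ?J" by (simp add: ideal_gen.gen)
  ultimately show ?thesis by simp
qed

end

locale lie_alg =
  fixes scale :: "'r::comm_ring_1 \<Rightarrow> 'q::ab_group_add \<Rightarrow> 'q"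
    and br :: "'q \<Rightarrow> 'q \<Rightarrow> 'q"
  assumes lie_algebra: "lie_algebra scale br"
begin

sublocale module scale
  using lie_algebra unfolding lie_algebra_def by blast

lemma bracket_add_left: "br (x + y) z = br x z + br y z"
  and bracket_add_right: "br x (y + z) = br x y + br x z"
  and bracket_scale_left: "br (scale c x) y = scale c (br x y)"
  and bracket_scale_right: "br x (scale c y) = scale c (br x y)"
  and bracket_self: "br x x = 0"
  and jacobi: "br x (br y z) + br y (br z x) + br z (br x y) = 0"
  using lie_algebra unfolding lie_algebra_def by blast+

lemma bracket_zero_left [simp]: "br 0 x = 0"
  using bracket_add_left[of 0 0 x] by simp

lemma bracket_zero_right [simp]: "br x 0 = 0"
  using bracket_add_right[of x 0 0] by simp

lemma bracket_antisym: "br x y = - br y x"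
proof -
  have "br (x + y) (x + y) = br x x + br x y + (br y x + br y y)"
    by (simp add: bracket_add_left bracket_add_right add.assoc)
  then have "br x y + br y x = 0" by (simp add: bracket_self)
  then show ?thesis by (simp add: eq_neg_iff_add_eq_0)
qed

lemma module_hom_ad: "module_hom scale scale (ad br x)"
  unfolding module_hom_iff ad_def by (simp add: module_axioms bracket_add_right bracket_scale_right)

lemma ad_in_MQ: "ad br x \<in> MQ scale br"
  and id_in_MQ: "id \<in> MQ scale br"
  unfolding MQ_def by (auto intro: alg_gen.gen)

lemma comp_in_MQ: "f \<in> MQ scale br \<Longrightarrow> g \<in> MQ scale br \<Longrightarrow> f \<circ> g \<in> MQ scale br"
  unfolding MQ_def by (rule alg_gen.mult)

lemma module_hom_MQ_generators: "\<forall>s\<in>insert id {ad br x |x. True}. module_hom scale scale s"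
  using module_hom_ad module_hom_id by blast

lemma module_hom_MQ: "f \<in> MQ scale br \<Longrightarrow> module_hom scale scale f"
  unfolding MQ_def using module_hom_alg_gen module_hom_MQ_generators by blast

lemma AQ_subset_MQ: "AQ scale br \<subseteq> MQ scale br"
  unfolding AQ_def MQ_def by (auto intro: alg_gen_mono)

lemma lie_ideal_bracket_right:
  assumes "lie_ideal scale br L I" and "x \<in> I" and "l \<in> L"
  shows "br x l \<in> I"
proof -
  have "br l x \<in> I" using assms unfolding lie_ideal_def by blast
  then have "- br l x \<in> I" using assms(1) subspace_neg unfolding lie_ideal_def by blast
  then show ?thesis by (simp add: bracket_antisym[of x l])
qed

lemma lie_ann_lie_ideal:
  assumes L: "lie_subalgebra scale br L" and I: "lie_ideal scale br L I"
  shows "lie_ideal scale br L (lie_ann br L I)"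
  unfolding lie_ideal_def
proof (intro conjI ballI)
  show "subspace (lie_ann br L I)"
    using L unfolding lie_subalgebra_def subspace_def lie_ann_def
    by (auto simp: bracket_add_left bracket_scale_left)
  show "lie_ann br L I \<subseteq> L" unfolding lie_ann_def by blast
next
  fix l a assume l: "l \<in> L" and a: "a \<in> lie_ann br L I"
  have "br (br l a) x = 0" if x: "x \<in> I" for x
  proof -
    have "br a x = 0" "br a (br x l) = 0"
      using a x lie_ideal_bracket_right[OF I x l] unfolding lie_ann_def by blast+
    then have "br x (br l a) = 0"
      using jacobi[of l a x] by simp
    then show ?thesis by (simp add: bracket_antisym[of "br l a"])
  qed
  moreover have "br l a \<in> L"
    using L l a unfolding lie_subalgebra_def lie_ann_def by blast
  ultimately show "br l a \<in> lie_ann br L I" unfolding lie_ann_def by blast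
qed

lemma lie_semiprime_central_eq_zero:
  assumes "lie_semiprime scale br" and "\<forall>y. br z y = 0"
  shows "z = 0"
proof (rule ccontr)
  assume "z \<noteq> 0"
  have "lie_subalgebra scale br UNIV" "lie_ideal scale br UNIV UNIV"
    unfolding lie_subalgebra_def lie_ideal_def by simp_all
  then have "lie_ideal scale br UNIV (lie_ann br UNIV UNIV)"
    by (rule lie_ann_lie_ideal)
  moreover have "z \<in> lie_ann br UNIV UNIV"
    using assms(2) unfolding lie_ann_def by blast
  ultimately obtain a b where "a \<in> lie_ann br UNIV UNIV" "b \<in> lie_ann br UNIV UNIV" "br a b \<noteq> 0"
    using assms(1) \<open>z \<noteq> 0\<close> unfolding lie_semiprime_def by blast
  then show False unfolding lie_ann_def by blast
qed

lemma dense_l_ann_comp_MQ: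
  assumes dense: "dense_ext scale br L" and I: "lie_ideal scale br L I"
    and \<nu>: "\<nu> \<in> l_ann (MQ scale br) (ad br ` I)" and \<beta>: "\<beta> \<in> MQ scale br"
  shows "\<nu> \<circ> \<beta> \<in> l_ann (MQ scale br) (ad br ` I)"
proof -
  have "\<nu> \<circ> \<beta> \<in> l_ann (alg_gen scale (insert id {ad br x |x. True})) (ad br ` I)"
  proof (rule l_ann_comp_alg_gen[OF module_hom_MQ_generators _ \<beta>[unfolded MQ_def] \<nu>[unfolded MQ_def]],
      unfold MQ_def[symmetric])
    fix \<nu> s assume \<nu>: "\<nu> \<in> l_ann (MQ scale br) (ad br ` I)" and "s \<in> insert id {ad br x |x. True}"
    then consider "s = id" | q where "s = ad br q" by blast
    then show "\<nu> \<circ> s \<in> l_ann (MQ scale br) (ad br ` I)"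
    proof cases
      case 1
      with \<nu> show ?thesis by simp
    next
      case (2 q)
      have \<nu>_MQ: "\<nu> \<in> MQ scale br" using \<nu> unfolding l_ann_def by blast
      have "\<nu> \<circ> ad br q \<circ> ad br a = (\<lambda>_. 0)" if a: "a \<in> I" for a
      proof -
        have "(\<nu> \<circ> ad br q \<circ> ad br a) x = 0" if x: "x \<in> L" for x
        proof -
          have "\<nu> \<circ> ad br (br a x) = (\<lambda>_. 0)"
            using \<nu> lie_ideal_bracket_right[OF I a x] unfolding l_ann_def by blast
          then have "\<nu> (br (br a x) q) = 0" by (metis ad_def comp_apply)
          then show ?thesis
            using module_hom.neg[OF module_hom_MQ[OF \<nu>_MQ]]
            by (simp add: ad_def bracket_antisym[of q])
        qed
        moreover have "\<nu> \<circ> ad br q \<circ> ad br a \<in> MQ scale br"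
          using \<nu>_MQ by (simp add: comp_in_MQ ad_in_MQ)
        ultimately show ?thesis using dense unfolding dense_ext_def by blast
      qed
      then show ?thesis
        using 2 \<nu>_MQ unfolding l_ann_def by (auto simp: comp_in_MQ ad_in_MQ)
    qed
  qed
  then show ?thesis unfolding MQ_def .
qed

lemma mult_semiprime_sandwich_zero:
  assumes "mult_semiprime scale br" and "g \<in> MQ scale br"
    and "\<And>\<beta>. \<beta> \<in> MQ scale br \<Longrightarrow> g \<circ> \<beta> \<circ> g = (\<lambda>_. 0)"
  shows "g = (\<lambda>_. 0)"
  using alg_semiprime_sandwich_zero[OF module_hom_MQ_generators] assms id_in_MQ
  unfolding mult_semiprime_def sandwich_zero_def MQ_def by blast

lemma lie_ideal_inter_lie_ann:
  assumes dense: "dense_ext scale br L" and ms: "mult_semiprime scale br"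
    and I: "lie_ideal scale br L I"
  shows "I \<inter> lie_ann br L I = {0}"
proof -
  have "k = 0" if k: "k \<in> I" "k \<in> lie_ann br L I" for k
  proof -
    have "ad br k \<circ> ad br a = (\<lambda>_. 0)" if a: "a \<in> I" for a
    proof -
      have "(ad br k \<circ> ad br a) x = 0" if "x \<in> L" for x
        using k(2) lie_ideal_bracket_right[OF I a that] unfolding lie_ann_def ad_def by simp
      moreover have "ad br k \<circ> ad br a \<in> MQ scale br" by (simp add: comp_in_MQ ad_in_MQ)
      ultimately show ?thesis using dense unfolding dense_ext_def by blast
    qed
    then have "ad br k \<in> l_ann (MQ scale br) (ad br ` I)"
      unfolding l_ann_def by (auto simp: ad_in_MQ)
    then have "ad br k \<circ> \<beta> \<circ> ad br k = (\<lambda>_. 0)" if "\<beta> \<in> MQ scale br" for \<beta>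
      using dense_l_ann_comp_MQ[OF dense I _ that] k(1) unfolding l_ann_def by blast
    then have "ad br k = (\<lambda>_. 0)"
      using mult_semiprime_sandwich_zero[OF ms ad_in_MQ] by blast
    then show "k = 0"
      using ms lie_semiprime_central_eq_zero unfolding mult_semiprime_def ad_def by metis
  qed
  moreover have "0 \<in> I \<inter> lie_ann br L I"
    using I subspace_0 unfolding lie_ideal_def lie_ann_def by auto
  ultimately show ?thesis by blast
qed

lemma essential_ideal_lie_ann_eq_zero:
  assumes L: "lie_subalgebra scale br L" and dense: "dense_ext scale br L"
    and ms: "mult_semiprime scale br" and ess: "essential_ideal scale br L I"
  shows "lie_ann br L I = {0}"
proof -
  have I: "lie_ideal scale br L I" using ess unfolding essential_ideal_def by blast
  have "I \<inter> lie_ann br L I = {0}" by (rule lie_ideal_inter_lie_ann[OF dense ms I])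
  then show ?thesis
    using ess lie_ann_lie_ideal[OF L I] unfolding essential_ideal_def by blast
qed

lemma algebra_of_quotients_lie_ann_eq_zero:
  assumes quot: "algebra_of_quotients scale br L" and I: "lie_ideal scale br L I"
    and ann: "lie_ann br L I = {0}"
  shows "lie_ann br UNIV I = {0}"
proof -
  have "w = 0" if w: "w \<in> lie_ann br UNIV I" for w
  proof (rule ccontr)
    assume "w \<noteq> 0"
    then obtain J where J: "lie_ideal scale br L J"
      and nonzero: "{br a w | a. a \<in> J} \<noteq> {0}" and in_L: "{br a w | a. a \<in> J} \<subseteq> L"
      using quot unfolding algebra_of_quotients_def by blast
    have "0 \<in> J" using J subspace_0 unfolding lie_ideal_def by blast
    have "\<exists>j\<in>J. br j w \<noteq> 0"
    proof (rule ccontr)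
      assume "\<not> (\<exists>j\<in>J. br j w \<noteq> 0)"
      then have "{br a w | a. a \<in> J} = {0}" using \<open>0 \<in> J\<close> by force
      with nonzero show False ..
    qed
    then obtain j where j: "j \<in> J" and s: "br j w \<noteq> 0" by blast
    have "br (br j w) x = 0" if x: "x \<in> I" for x
    proof -
      have "j \<in> L" using J j unfolding lie_ideal_def by blast
      then have "br w x = 0" "br w (br x j) = 0"
        using w x lie_ideal_bracket_right[OF I x] unfolding lie_ann_def by blast+
      then have "br x (br j w) = 0"
        using jacobi[of x j w] by (simp add: bracket_antisym[of w x])
      then show ?thesis by (simp add: bracket_antisym[of "br j w"])
    qed
    moreover have "br j w \<in> L" using in_L j by blast
    ultimately have "br j w \<in> lie_ann br L I" unfolding lie_ann_def by blast
    with ann s show False by blast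
  qed
  then show ?thesis unfolding lie_ann_def by auto
qed

lemma ad_comp_l_ann_eq_zero:
  assumes dense: "dense_ext scale br L" and ms: "mult_semiprime scale br"
    and I: "lie_ideal scale br L I" and \<mu>: "\<mu> \<in> l_ann (MQ scale br) (ad br ` I)" and x: "x \<in> I"
  shows "ad br x \<circ> \<mu> = (\<lambda>_. 0)"
proof (rule mult_semiprime_sandwich_zero[OF ms])
  show "ad br x \<circ> \<mu> \<in> MQ scale br"
    using \<mu> unfolding l_ann_def by (auto simp: comp_in_MQ ad_in_MQ)
next
  fix \<beta> assume "\<beta> \<in> MQ scale br"
  then have "\<mu> \<circ> \<beta> \<circ> ad br x = (\<lambda>_. 0)"
    using dense_l_ann_comp_MQ[OF dense I \<mu>] x unfolding l_ann_def by blast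
  then show "ad br x \<circ> \<mu> \<circ> \<beta> \<circ> (ad br x \<circ> \<mu>) = (\<lambda>_. 0)"
    by (simp add: fun_eq_iff ad_def)
qed

end

theorem mainTheorem17:
  fixes scale :: "'r::comm_ring_1 \<Rightarrow> 'q::ab_group_add \<Rightarrow> 'q"
    and br :: "'q \<Rightarrow> 'q \<Rightarrow> 'q"
    and L I :: "'q set"
  assumes "lie_algebra scale br"
    and "lie_subalgebra scale br L"
    and "dense_ext scale br L"
    and "mult_semiprime scale br"
    and "algebra_of_quotients scale br L"
    and "essential_ideal scale br L I"
  shows "l_ann (AQ scale br) (tilde scale br L I) = {\<lambda>_. 0}"
proof -
  interpret lie_alg scale br using assms(1) by (rule lie_alg.intro)
  have I: "lie_ideal scale br L I" using assms(6) unfolding essential_ideal_def by blast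
  have ann_Q: "lie_ann br UNIV I = {0}"
    using algebra_of_quotients_lie_ann_eq_zero[OF assms(5) I] essential_ideal_lie_ann_eq_zero[OF assms(2,3,4,6)]
    by blast
  have "\<mu> = (\<lambda>_. 0)" if \<mu>: "\<mu> \<in> l_ann (AQ scale br) (tilde scale br L I)" for \<mu>
  proof -
    have "ad br ` I \<subseteq> tilde scale br L I"
      unfolding tilde_def by (auto intro: ideal_gen.gen)
    then have "\<mu> \<in> l_ann (MQ scale br) (ad br ` I)"
      using \<mu> AQ_subset_MQ unfolding l_ann_def by blast
    then have "ad br x \<circ> \<mu> = (\<lambda>_. 0)" if "x \<in> I" for x
      using ad_comp_l_ann_eq_zero[OF assms(3,4) I _ that] by blast
    then have "\<mu> q \<in> lie_ann br UNIV I" for q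
      unfolding lie_ann_def by (auto simp: fun_eq_iff ad_def bracket_antisym[of "\<mu> q"])
    then show ?thesis using ann_Q by auto
  qed
  moreover have "(\<lambda>_. 0) \<in> l_ann (AQ scale br) (tilde scale br L I)"
    unfolding l_ann_def AQ_def by (simp add: alg_gen.zero comp_def)
  ultimately show ?thesis by blast
qed

end
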